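(* Assume the setting in the context, with a decomposition of $\mathcal X$ over $A$, $g\in\mathcal G_s$ and $\alpha\in(0,1)$. Let $\mathcal V$ be any subspace of $\mathcal U$ with $\mathcal U=\big(\bigoplus_{i\in\mathcal I}\mathcal E_i\big)\oplus\mathcal V$. If $\{(A,B|_{\mathcal E_i},g,\alpha)\}_{i\in\mathcal I}$ is a decomposition (Definition 1) of $(A,B,g,\alpha)$, then $A(\mathcal X)\cap B(\mathcal V)=\{0\}$.
   Context: Let $\mathcal F$ be a field and $\mathcal X,\mathcal U$ finite-dimensional vector spaces over $\mathcal F$. Let $A:\mathcal X\to\mathcal X$ and $B:\mathcal U\to\mathcal X$ be linear maps with $B$ injective, and consider $x_{t+1}=Ax_t+Bu_t$ and a cost $g:\mathcal X\to\mathbb R_{\ge0}$ with $g(x)=0\iff x=0$. Standing assumption: all minima appearing below are attained. Infinite-horizon problem $(A,B,g,\alpha)$: policies $\pi(x_0)=(\pi_t(x_0))_{t\in\mathbb Z_+}\in\mathcal U^{\mathbb Z_+}$, cost $J(x_0,\pi)=\sum_{t\ge0}\alpha^tg(x_t)$ with $x_{t+1}=Ax_t+B\pi_t(x_0)$; $J^*(x_0)=\min_\pi J(x_0,\pi)$, which satisfies the Bellman equation $J^*(x)=g(x)+\alpha\min_{u}J^*(Ax+Bu)$; minimizing policies are optimal. A decomposition of $\mathcal X$ over $A$ is a direct sum $\mathcal X=\mathcal X_1\oplus\cdots\oplus\mathcal X_r$ with $r>1$ and $A\mathcal X_i\subseteq\mathcal X_i$, $i\in\mathcal I=\{1,\dots,r\}$;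 $\rho_i:\mathcal X\to\mathcal X_i$ is the projection along the other summands. $\mathcal G_s$ is the set of $h:\mathcal X\to\mathbb R_{\ge0}$ with $h(x)=\sum_i h(\rho_i(x))$ for all $x$. $\mathcal E_i=\{u\in\mathcal U:Bu\in\mathcal X_i\}$ (the sum of the $\mathcal E_i$ is direct since $B$ is injective). Subproblem $(A,B|_{\mathcal E_i},g,\alpha)$: same problem for $x_{i,t+1}=Ax_{i,t}+B\bar u_{i,t}$ with states in $\mathcal X_i$ and inputs in $\mathcal E_i$; optimal cost $\bar J_i^*$, optimal policies $\bar\pi_i^*$. Definition 1: the family is a decomposition of $(A,B,g,\alpha)$ if for every $x$: $J^*(x)=\sum_i\bar J_i^*(\rho_i(x))$, and for every choice of optimal policies $\bar\pi_i^*(\rho_i(x))$ there is an optimal policy $\pi^*(x)$ with $\pi^*(x)=\sum_i\bar\pi_i^*(\rho_i(x))$. *)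

theory Defs
  imports Main "HOL-Library.Extended_Nonnegative_Real"
begin

definition is_direct_sum :: "('f::field \<Rightarrow> 'v::ab_group_add \<Rightarrow> 'v) \<Rightarrow> nat set \<Rightarrow> (nat \<Rightarrow> 'v set) \<Rightarrow> bool" where
  "is_direct_sum s I W \<longleftrightarrow> finite I \<and> (\<forall>i\<in>I. module.subspace s (W i)) \<and>
     (\<forall>v. \<exists>!w. (\<forall>i. w i \<in> (if i \<in> I then W i else {0})) \<and> v = sum w I)"

definition proj :: "nat set \<Rightarrow> (nat \<Rightarrow> 'v::ab_group_add set) \<Rightarrow> nat \<Rightarrow> 'v \<Rightarrow> 'v" where
  "proj I W i v = (THE w. (\<forall>j. w j \<in> (if j \<in> I then W j else {0})) \<and> v = sum w I) i"

fun traj :: "('x::ab_group_add \<Rightarrow> 'x) \<Rightarrow> ('u \<Rightarrow> 'x) \<Rightarrow> 'x \<Rightarrow> (nat \<Rightarrow> 'u) \<Rightarrow> nat \<Rightarrow> 'x" where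
  "traj A B x0 u 0 = x0"
| "traj A B x0 u (Suc t) = A (traj A B x0 u t) + B (u t)"

definition cost :: "('x::ab_group_add \<Rightarrow> 'x) \<Rightarrow> ('u \<Rightarrow> 'x) \<Rightarrow> ('x \<Rightarrow> real) \<Rightarrow> real \<Rightarrow> 'x \<Rightarrow> (nat \<Rightarrow> 'u) \<Rightarrow> ennreal" where
  "cost A B g \<alpha> x0 u = (\<Sum>t. ennreal (\<alpha> ^ t * g (traj A B x0 u t)))"

definition opt_cost :: "('x::ab_group_add \<Rightarrow> 'x) \<Rightarrow> ('u \<Rightarrow> 'x) \<Rightarrow> ('x \<Rightarrow> real) \<Rightarrow> real \<Rightarrow> 'u set \<Rightarrow> 'x \<Rightarrow> ennreal" where
  "opt_cost A B g \<alpha> Us x0 = (INF u \<in> {u. \<forall>t. u t \<in> Us}. cost A B g \<alpha> x0 u)"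

definition is_optimal :: "('x::ab_group_add \<Rightarrow> 'x) \<Rightarrow> ('u \<Rightarrow> 'x) \<Rightarrow> ('x \<Rightarrow> real) \<Rightarrow> real \<Rightarrow> 'u set \<Rightarrow> 'x \<Rightarrow> (nat \<Rightarrow> 'u) \<Rightarrow> bool" where
  "is_optimal A B g \<alpha> Us x0 u \<longleftrightarrow> (\<forall>t. u t \<in> Us) \<and> cost A B g \<alpha> x0 u = opt_cost A B g \<alpha> Us x0"

definition inputs_into :: "('u \<Rightarrow> 'x) \<Rightarrow> 'x set \<Rightarrow> 'u set" where
  "inputs_into B Xi = {u. B u \<in> Xi}"

definition is_problem_decomposition :: "('x::ab_group_add \<Rightarrow> 'x) \<Rightarrow> ('u::comm_monoid_add \<Rightarrow> 'x) \<Rightarrow> ('x \<Rightarrow> real) \<Rightarrow> real \<Rightarrow> nat set \<Rightarrow> (nat \<Rightarrow> 'x set) \<Rightarrow> bool" where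
  "is_problem_decomposition A B g \<alpha> I Xs \<longleftrightarrow>
     (\<forall>x. opt_cost A B g \<alpha> UNIV x = (\<Sum>i\<in>I. opt_cost A B g \<alpha> (inputs_into B (Xs i)) (proj I Xs i x))
        \<and> (\<forall>ub. (\<forall>i\<in>I. is_optimal A B g \<alpha> (inputs_into B (Xs i)) (proj I Xs i x) (ub i))
               \<longrightarrow> is_optimal A B g \<alpha> UNIV x (\<lambda>t. \<Sum>i\<in>I. ub i t)))"

end

theory Submission
  imports Defs
begin

text \<open>If some v \<in> V had B v = A x0, the input -v would steer x0 to 0 in one step, so the
  optimal cost from x0 is at most the stage cost g x0. The summed subproblem policy is optimal,
  hence it also steers x0 to 0 in one step; its first input u0, a sum of inputs from the E i,
  then satisfies B (v + u0) = 0, so v + u0 = 0, and directness of U = (\<Oplus> E i) \<oplus> V forces v = 0.\<close>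

lemma proj_in_summand:
  assumes "is_direct_sum s I W" "i \<in> I"
  shows "proj I W i v \<in> W i"
proof -
  have "\<exists>!w. (\<forall>j. w j \<in> (if j \<in> I then W j else {0})) \<and> v = sum w I"
    using assms(1) unfolding is_direct_sum_def by blast
  from theI'[OF this] show ?thesis
    unfolding proj_def using assms(2) by (metis (no_types, lifting))
qed

lemma direct_sum_components_eq_0:
  assumes "module s" and ds: "is_direct_sum s I W"
    and w: "\<forall>i\<in>I. w i \<in> W i" and sum0: "sum w I = 0" and "i \<in> I"
  shows "w i = 0"
proof -
  define w' where "w' = (\<lambda>j. if j \<in> I then w j else 0)"
  have "\<exists>!w. (\<forall>j. w j \<in> (if j \<in> I then W j else {0})) \<and> 0 = sum w I"
    using ds unfolding is_direct_sum_def by blast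
  moreover have "\<forall>j. w' j \<in> (if j \<in> I then W j else {0})" "0 = sum w' I"
    using w sum0 by (auto simp: w'_def)
  moreover have "\<forall>j. 0 \<in> (if j \<in> I then W j else {0})"
    using ds module.subspace_0[OF \<open>module s\<close>] unfolding is_direct_sum_def by auto
  ultimately have "w' = (\<lambda>_. 0)" by auto
  then show ?thesis using \<open>i \<in> I\<close> by (metis w'_def)
qed

lemma opt_cost_le_stage_cost_if_deadbeat:
  assumes "A 0 = 0" "B 0 = 0" "g 0 = 0" and steer: "A x0 + B a = 0"
  shows "opt_cost A B g \<alpha> UNIV x0 \<le> ennreal (g x0)"
proof -
  define u :: "nat \<Rightarrow> _" where "u = (\<lambda>t. if t = 0 then a else 0)"
  have traj0: "traj A B x0 u (Suc t) = 0" for t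
    by (induction t) (simp_all add: u_def steer assms(1,2))
  have "cost A B g \<alpha> x0 u = (\<Sum>t\<in>{0}. ennreal (\<alpha> ^ t * g (traj A B x0 u t)))"
    unfolding cost_def
  proof (rule suminf_finite)
    fix n :: nat assume "n \<notin> {0}"
    then obtain m where "n = Suc m" by (cases n) auto
    then show "ennreal (\<alpha> ^ n * g (traj A B x0 u n)) = 0" using traj0 assms(3) by simp
  qed simp
  then have "cost A B g \<alpha> x0 u = ennreal (g x0)" by simp
  then show ?thesis
    unfolding opt_cost_def by (intro INF_lower2[of u]) auto
qed

lemma next_state_eq_0_if_cost_le_stage_cost:
  assumes g_nonneg: "\<forall>x. g x \<ge> 0" and g_zero: "\<forall>x. g x = 0 \<longleftrightarrow> x = 0" and "\<alpha> > 0"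
    and le: "cost A B g \<alpha> x0 u \<le> ennreal (g x0)"
  shows "A x0 + B (u 0) = 0"
proof -
  define f where "f = (\<lambda>t. ennreal (\<alpha> ^ t * g (traj A B x0 u t)))"
  have "sum f {..<2} \<le> suminf f"
    by (rule sum_le_suminf) auto
  with le have "f 0 + f 1 \<le> ennreal (g x0)"
    unfolding cost_def f_def[symmetric] by (simp add: numeral_2_eq_2)
  moreover have "f 0 + f 1 = ennreal (g x0 + \<alpha> * g (traj A B x0 u 1))"
    using g_nonneg \<open>\<alpha> > 0\<close> by (simp add: f_def)
  ultimately have "g x0 + \<alpha> * g (traj A B x0 u 1) \<le> g x0"
    using g_nonneg by simp
  then have "g (traj A B x0 u 1) = 0"
    using g_nonneg \<open>\<alpha> > 0\<close> by (simp add: antisym mult_le_0_iff)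
  then show ?thesis using g_zero by simp
qed

theorem proposition8:
  fixes sX :: "'f::field \<Rightarrow> 'x::ab_group_add \<Rightarrow> 'x"
    and sU :: "'f \<Rightarrow> 'u::ab_group_add \<Rightarrow> 'u"
    and A :: "'x \<Rightarrow> 'x" and B :: "'u \<Rightarrow> 'x"
    and g :: "'x \<Rightarrow> real" and \<alpha> :: real
    and r :: nat and Xs :: "nat \<Rightarrow> 'x set" and V :: "'u set"
  assumes fdX: "\<exists>BX. finite_dimensional_vector_space sX BX"
    and fdU: "\<exists>BU. finite_dimensional_vector_space sU BU"
    and linA: "Vector_Spaces.linear sX sX A"
    and linB: "Vector_Spaces.linear sU sX B"
    and injB: "inj B"
    and g_nonneg: "\<forall>x. g x \<ge> 0"
    and g_zero: "\<forall>x. g x = 0 \<longleftrightarrow> x = 0"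
    and r_gt: "r > 1"
    and dsX: "is_direct_sum sX {1..r} Xs"
    and invA: "\<forall>i\<in>{1..r}. A ` Xs i \<subseteq> Xs i"
    and g_sep: "\<forall>x. g x = (\<Sum>i\<in>{1..r}. g (proj {1..r} Xs i x))"
    and alpha: "0 < \<alpha>" "\<alpha> < 1"
    and attained: "\<forall>x. \<exists>u. is_optimal A B g \<alpha> UNIV x u"
    and attained_sub: "\<forall>i\<in>{1..r}. \<forall>z\<in>Xs i. \<exists>u. is_optimal A B g \<alpha> (inputs_into B (Xs i)) z u"
    and V_sub: "module.subspace sU V"
    and dsU: "is_direct_sum sU {0..r} (\<lambda>i. if i = 0 then V else inputs_into B (Xs i))"
    and decomp: "is_problem_decomposition A B g \<alpha> {1..r} Xs"
  shows "range A \<inter> B ` V = {0}"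
proof -
  interpret A: module_hom sX sX A using linA module_hom_iff_linear by blast
  interpret B: module_hom sU sX B using linB module_hom_iff_linear by blast
  have "0 \<in> V" using V_sub by (rule B.m1.subspace_0)
  have steer_to_V: "v = 0" if steer: "A x0 = B v" and "v \<in> V" for x0 v
  proof -
    have "opt_cost A B g \<alpha> UNIV x0 \<le> ennreal (g x0)"
      by (rule opt_cost_le_stage_cost_if_deadbeat[where a = "- v"])
        (use g_zero steer A.zero B.zero B.neg in auto)
    have "\<forall>i\<in>{1..r}. \<exists>u. is_optimal A B g \<alpha> (inputs_into B (Xs i)) (proj {1..r} Xs i x0) u"
      using attained_sub proj_in_summand[OF dsX] by blast
    then obtain ub where ub: "\<forall>i\<in>{1..r}. is_optimal A B g \<alpha> (inputs_into B (Xs i)) (proj {1..r} Xs i x0) (ub i)"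
      by (rule bchoice[THEN exE])
    then have "is_optimal A B g \<alpha> UNIV x0 (\<lambda>t. \<Sum>i\<in>{1..r}. ub i t)"
      using decomp unfolding is_problem_decomposition_def by blast
    with \<open>opt_cost A B g \<alpha> UNIV x0 \<le> ennreal (g x0)\<close>
    have "A x0 + B (\<Sum>i\<in>{1..r}. ub i 0) = 0"
      by (intro next_state_eq_0_if_cost_le_stage_cost[OF g_nonneg g_zero alpha(1)])
        (simp add: is_optimal_def)
    then have "B (v + (\<Sum>i\<in>{1..r}. ub i 0)) = B 0"
      by (simp add: steer B.add)
    then have "v + (\<Sum>i\<in>{1..r}. ub i 0) = 0"
      by (rule injD[OF injB])
    moreover have "(\<Sum>i\<in>{0..r}. if i = 0 then v else ub i 0) = v + (\<Sum>i\<in>{1..r}. ub i 0)"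
      by (simp add: sum.atLeast_Suc_atMost)
    ultimately have "(\<Sum>i\<in>{0..r}. if i = 0 then v else ub i 0) = 0"
      by simp
    moreover have "\<forall>i\<in>{1..r}. ub i 0 \<in> inputs_into B (Xs i)"
      using ub unfolding is_optimal_def by blast
    ultimately show "v = 0"
      using direct_sum_components_eq_0[OF B.m1.module_axioms dsU, of "\<lambda>i. if i = 0 then v else ub i 0" 0]
        \<open>v \<in> V\<close> by auto
  qed
  have "range A \<inter> B ` V \<subseteq> {0}"
    using steer_to_V B.zero by fastforce
  moreover have "0 \<in> range A \<inter> B ` V"
    using \<open>0 \<in> V\<close> A.zero B.zero by (metis IntI image_eqI rangeI)
  ultimately show ?thesis by blast
qed

end
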